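(* Under the hypotheses of Claim 4.2 (a simple graph $G'$ on $m$ vertices whose minimum degree $\delta$ satisfies $m\cdot\frac{(2\ell-1)^2-1}{(2\ell-1)^2}+\frac{4\ell-3+q}{(2\ell-1)^2}\leq\delta$ for integers $\ell\geq2$, $q\geq1$, and a cyclic enumeration $v_0,\dots,v_{m-1}$ of its vertices), let $r\in\{1,\dots,2\ell-2\}$. Then for every set $C_1=\{v_i,\dots,v_{i+r-1}\}$ of $r$ cyclically consecutive vertices there is another set $C_2=\{v_j,\dots,v_{j+r-1}\}$ of $r$ cyclically consecutive vertices, disjoint from $C_1$, such that every vertex of $C_1$ is adjacent in $G'$ to every vertex of $C_2$.
   Context: Indices are taken modulo $m$. *)

theory Defs
  imports Complex_Main
begin

definition simple_graph :: "'a set \<Rightarrow> ('a \<Rightarrow> 'a \<Rightarrow> bool) \<Rightarrow> bool" where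
  "simple_graph V E \<longleftrightarrow> finite V \<and> (\<forall>x\<in>V. \<forall>y\<in>V. E x y \<longleftrightarrow> E y x) \<and> (\<forall>x\<in>V. \<not> E x x)"

definition degree :: "'a set \<Rightarrow> ('a \<Rightarrow> 'a \<Rightarrow> bool) \<Rightarrow> 'a \<Rightarrow> nat" where
  "degree V E x = card {y \<in> V. E x y}"

definition min_degree :: "'a set \<Rightarrow> ('a \<Rightarrow> 'a \<Rightarrow> bool) \<Rightarrow> nat" where
  "min_degree V E = Min (degree V E ` V)"

definition cyc_block :: "(nat \<Rightarrow> 'a) \<Rightarrow> nat \<Rightarrow> nat \<Rightarrow> nat \<Rightarrow> 'a set" where
  "cyc_block v m i r = (\<lambda>k. v ((i + k) mod m)) ` {0..<r}"

end

theory Submission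
  imports Defs
begin

text \<open>Let \<open>t = m - \<delta>\<close>, so every vertex has at most \<open>t\<close> non-neighbours, itself included.
  The degree condition says \<open>(2\<ell> - 1)\<^sup>2 t < m\<close>, hence \<open>r\<^sup>2 t < m\<close>. The vertices that are
  non-adjacent to some vertex of \<open>C\<^sub>1\<close> form a set \<open>B \<supseteq> C\<^sub>1\<close> of at most \<open>r t\<close> elements, and
  each vertex of \<open>B\<close> lies in at most \<open>r\<close> of the \<open>m\<close> cyclic blocks of length \<open>r\<close>. So fewer than
  \<open>m\<close> blocks meet \<open>B\<close>, and any other block is disjoint from \<open>C\<^sub>1\<close> and complete to it.\<close>

lemma min_degree_le_degree:
  assumes "finite V" "x \<in> V"
  shows "min_degree V E \<le> degree V E x"
  unfolding min_degree_def using assms by (intro Min_le) auto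

lemma card_non_neighbours_le:
  assumes "finite V" "x \<in> V"
  shows "card {y \<in> V. \<not> E x y} \<le> card V - min_degree V E"
proof -
  have "{y \<in> V. \<not> E x y} = V - {y \<in> V. E x y}" by blast
  then have "card {y \<in> V. \<not> E x y} = card V - degree V E x"
    using assms(1) by (simp add: card_Diff_subset degree_def)
  then show ?thesis using min_degree_le_degree[OF assms, of E] by simp
qed

lemma min_degree_le_card:
  assumes "finite V" "V \<noteq> {}"
  shows "min_degree V E \<le> card V"
proof -
  obtain x where "x \<in> V" using assms(2) by blast
  have "degree V E x \<le> card V"
    unfolding degree_def using assms(1) by (intro card_mono) auto
  then show ?thesis using min_degree_le_degree[OF assms(1) \<open>x \<in> V\<close>, of E] by simp
qed

lemma card_UN_non_neighbours_le:
  assumes "finite V" "C \<subseteq> V"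
  shows "card (\<Union>x\<in>C. {y \<in> V. \<not> E x y}) \<le> card C * (card V - min_degree V E)"
proof -
  have "finite C" using assms finite_subset by blast
  then have "card (\<Union>x\<in>C. {y \<in> V. \<not> E x y}) \<le> (\<Sum>x\<in>C. card {y \<in> V. \<not> E x y})"
    by (rule card_UN_le)
  also have "\<dots> \<le> card C * (card V - min_degree V E)"
    using sum_bounded_above[of C "\<lambda>x. card {y \<in> V. \<not> E x y}"]
      card_non_neighbours_le[OF assms(1), of _ E] assms(2) by (simp add: subset_iff)
  finally show ?thesis .
qed

lemma card_cyc_block_le: "card (cyc_block v m i r) \<le> r"
  unfolding cyc_block_def using card_image_le[of "{0..<r}"] by simp

lemma cyc_block_subset:
  assumes "bij_betw v {0..<m} V" "0 < m"
  shows "cyc_block v m i r \<subseteq> V"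
  unfolding cyc_block_def using assms bij_betwE by fastforce

lemma inj_on_rotate_mod: "inj_on (\<lambda>j. (j + k) mod m) {0..<(m::nat)}"
proof (rule inj_onI)
  fix j j' assume "j \<in> {0..<m}" "j' \<in> {0..<m}" and eq: "(j + k) mod m = (j' + k) mod m"
  have "j mod m = j' mod m"
    using eq nat_mod_eq_iff[of "j + k" m "j' + k"] nat_mod_eq_iff[of j m j'] by auto
  then show "j = j'" using \<open>j \<in> {0..<m}\<close> \<open>j' \<in> {0..<m}\<close> by simp
qed

lemma card_cyc_blocks_meeting_le:
  assumes "inj_on v {0..<m}" "finite B"
  shows "card {j \<in> {0..<m}. cyc_block v m j r \<inter> B \<noteq> {}} \<le> r * card B"
proof -
  define J where "J k = {j \<in> {0..<m}. v ((j + k) mod m) \<in> B}" for k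
  have "{j \<in> {0..<m}. cyc_block v m j r \<inter> B \<noteq> {}} = (\<Union>k\<in>{0..<r}. J k)"
    unfolding J_def cyc_block_def by blast
  moreover have "card (J k) \<le> card B" for k
  proof -
    have "(\<lambda>j. (j + k) mod m) ` {0..<m} \<subseteq> {0..<m}" by auto
    then have "inj_on (\<lambda>j. v ((j + k) mod m)) {0..<m}"
      using comp_inj_on[OF inj_on_rotate_mod[of k m] inj_on_subset[OF assms(1)]]
      by (simp add: comp_def)
    then have "inj_on (\<lambda>j. v ((j + k) mod m)) (J k)"
      by (rule inj_on_subset) (auto simp: J_def)
    then show ?thesis by (intro card_inj_on_le[OF _ _ assms(2)]) (auto simp: J_def)
  qed
  ultimately show ?thesis
    using card_UN_le[of "{0..<r}" J] sum_bounded_above[of "{0..<r}" "\<lambda>k. card (J k)" "card B"] by simp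
qed

lemma exists_cyc_block_complete_to:
  assumes graph: "simple_graph V E" and enum: "bij_betw v {0..<m} V"
    and small: "r * r * (card V - min_degree V E) < m" and "i < m"
  shows "\<exists>j<m. cyc_block v m i r \<inter> cyc_block v m j r = {} \<and>
           (\<forall>x\<in>cyc_block v m i r. \<forall>y\<in>cyc_block v m j r. E x y)"
proof -
  have finV: "finite V" and irrefl: "\<And>x. x \<in> V \<Longrightarrow> \<not> E x x"
    using graph unfolding simple_graph_def by blast+
  define C where "C = cyc_block v m i r"
  define B where "B = (\<Union>x\<in>C. {y \<in> V. \<not> E x y})"
  define J where "J = {j \<in> {0..<m}. cyc_block v m j r \<inter> B \<noteq> {}}"
  have CV: "C \<subseteq> V" unfolding C_def using cyc_block_subset[OF enum] \<open>i < m\<close> by simp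
  have CB: "C \<subseteq> B" unfolding B_def using CV irrefl by blast
  have "card B \<le> card C * (card V - min_degree V E)"
    unfolding B_def by (rule card_UN_non_neighbours_le[OF finV CV])
  also have "\<dots> \<le> r * (card V - min_degree V E)"
    unfolding C_def by (rule mult_le_mono1[OF card_cyc_block_le])
  finally have cardB: "card B \<le> r * (card V - min_degree V E)" .
  have "finite B" unfolding B_def using finV by (rule finite_subset[rotated]) blast
  then have "card J \<le> r * card B"
    unfolding J_def by (rule card_cyc_blocks_meeting_le[OF bij_betw_imp_inj_on[OF enum]])
  also have "\<dots> \<le> r * (r * (card V - min_degree V E))" using cardB by simp
  also have "\<dots> < card {0..<m}" using small by (simp add: mult.assoc)
  finally have "J \<noteq> {0..<m}" by blast
  moreover have "J \<subseteq> {0..<m}" unfolding J_def by blast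
  ultimately obtain j where "j \<in> {0..<m} - J" using psubset_imp_ex_mem by blast
  then have "j < m" by simp
  from \<open>j \<in> {0..<m} - J\<close> have CjB: "cyc_block v m j r \<inter> B = {}" unfolding J_def by simp
  have CjV: "cyc_block v m j r \<subseteq> V" using cyc_block_subset[OF enum] \<open>j < m\<close> by simp
  have "E x y" if "x \<in> C" "y \<in> cyc_block v m j r" for x y
  proof (rule ccontr)
    assume "\<not> E x y"
    then have "y \<in> B" unfolding B_def using that CjV by blast
    then show False using CjB that(2) by blast
  qed
  moreover have "C \<inter> cyc_block v m j r = {}" using CB CjB by blast
  ultimately show ?thesis using \<open>j < m\<close> unfolding C_def by blast
qed

lemma odd_square_mult_deficiency_lt:
  fixes m \<delta> l q :: nat
  assumes "\<delta> \<le> m" "l \<ge> 1" "q \<ge> 1"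
    and deg: "real m * (((2 * real l - 1)^2 - 1) / (2 * real l - 1)^2)
              + (4 * real l - 3 + real q) / (2 * real l - 1)^2 \<le> real \<delta>"
  shows "(2 * l - 1)^2 * (m - \<delta>) < m"
proof -
  define S where "S = (2 * real l - 1)^2"
  have "S > 0" using assms(2) unfolding S_def by simp
  have "(real m * (S - 1) + (4 * real l - 3 + real q)) / S \<le> real \<delta>"
    using deg unfolding S_def[symmetric] by (simp add: add_divide_distrib)
  then have "real m * (S - 1) + (4 * real l - 3 + real q) \<le> real \<delta> * S"
    using \<open>S > 0\<close> by (simp add: pos_divide_le_eq)
  then have "S * (real m - real \<delta>) < real m"
    using assms(2,3) by (simp add: algebra_simps)
  moreover have "real ((2 * l - 1)^2 * (m - \<delta>)) = S * (real m - real \<delta>)"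
    using assms(1,2) unfolding S_def by (simp add: of_nat_diff)
  ultimately show ?thesis by linarith
qed

theorem claim4p3:
  fixes V :: "'a set" and E :: "'a \<Rightarrow> 'a \<Rightarrow> bool" and v :: "nat \<Rightarrow> 'a"
    and m l q r :: nat
  assumes graph: "simple_graph V E"
    and card_V: "card V = m"
    and enum: "bij_betw v {0..<m} V"
    and l_ge: "l \<ge> 2" and q_ge: "q \<ge> 1"
    and deg: "real m * (((2 * real l - 1)^2 - 1) / (2 * real l - 1)^2)
              + (4 * real l - 3 + real q) / (2 * real l - 1)^2 \<le> real (min_degree V E)"
    and r_range: "1 \<le> r" "r \<le> 2 * l - 2"
  shows "\<forall>i<m. \<exists>j<m. cyc_block v m i r \<inter> cyc_block v m j r = {} \<and>
           (\<forall>x\<in>cyc_block v m i r. \<forall>y\<in>cyc_block v m j r. E x y)"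
proof (intro allI impI)
  fix i assume "i < m"
  then have "min_degree V E \<le> m"
    using min_degree_le_card[of V E] graph card_V unfolding simple_graph_def by force
  then have "(2 * l - 1)^2 * (m - min_degree V E) < m"
    using odd_square_mult_deficiency_lt l_ge q_ge deg by simp
  moreover have "r * r \<le> (2 * l - 1)^2"
    using r_range by (simp add: power2_eq_square mult_le_mono)
  ultimately have "r * r * (card V - min_degree V E) < m"
    using card_V by (meson le_less_trans mult_le_mono1)
  then show "\<exists>j<m. cyc_block v m i r \<inter> cyc_block v m j r = {} \<and>
           (\<forall>x\<in>cyc_block v m i r. \<forall>y\<in>cyc_block v m j r. E x y)"
    using exists_cyc_block_complete_to[OF graph enum _ \<open>i < m\<close>] by blast
qed

end
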